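(* Let $n,N\geq 1$ be integers, $0<\alpha<1$, and let $f=(f_1,\dots,f_N)^T:D^n\to B^N$ be holomorphic, where $D^n=\{z\in\mathbb{C}^n:\|z\|_\infty<1\}$ and $B^N=\{w\in\mathbb{C}^N:\|w\|<1\}$. Let $z_0=(z_{0,1},\dots,z_{0,n})^T\in\partial D^n$ and $1\le r\le n$ be such that $|z_{0,j}|=1$ for $1\le j\le r$ and $|z_{0,j}|<1$ for $r<j\le n$. Suppose $f$ is $C^{1+\alpha}$ at $z_0$ and $f(z_0)=w_0\in\partial B^N$. Put $a=f(0)$. Then there exist nonnegative real numbers $\gamma_1,\dots,\gamma_r$ with $\sum_{j=1}^r\gamma_j\geq 1$ such that $$\overline{J_f(z_0)}^T w_0=\lambda\,\mathrm{diag}(\gamma_1,\dots,\gamma_r,0,\dots,0)\,z_0,$$ where $\lambda=\dfrac{|1-\bar a^T w_0|^2}{1-\|a\|^2}>0$.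
   Context: Vectors are column vectors; $\|w\|$ is the Euclidean norm, $\|z\|_\infty=\max_j|z_j|$, $\bar a^T w_0=\sum_j \overline{a_j}\,w_{0,j}$. "$f$ is $C^{1+\alpha}$ at $z_0$" means: there is a neighborhood $V$ of $z_0$ such that $f$ extends to $\overline{D^n}\cap V$ as a $C^1$ map whose first-order partial derivatives are Hölder continuous with exponent $\alpha$ there. $J_f(z_0)=\left(\frac{\partial f_i}{\partial z_j}(z_0)\right)_{N\times n}$ is the complex Jacobian matrix of (this extension of) $f$ at $z_0$, and $\overline{J_f(z_0)}^T$ its conjugate transpose. $\mathrm{diag}(\gamma_1,\dots,\gamma_r,0,\dots,0)$ is the $n\times n$ diagonal matrix with those diagonal entries. *)

theory Defs
  imports "HOL-Analysis.Analysis"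
begin

definition polydisc :: "(complex ^ 'n::finite) set" where
  "polydisc = {z. \<forall>j. cmod (z $ j) < 1}"

definition holo_vec_on ::
  "(complex ^ 'n::finite \<Rightarrow> complex ^ 'm::finite) \<Rightarrow> (complex ^ 'n) set \<Rightarrow> bool" where
  "holo_vec_on f S \<longleftrightarrow> (\<forall>z\<in>S. \<exists>L. (f has_derivative L) (at z) \<and>
       (\<forall>c h. L (c *s h) = c *s L h))"

text \<open>g is a C^1 extension of f to closure(D^n) \<inter> V, with derivative g',
  whose first-order (real) partial derivatives are Hoelder continuous with exponent alpha.\<close>
definition C1alpha_extension ::
  "(complex ^ 'n::finite \<Rightarrow> complex ^ 'm::finite) \<Rightarrow> real \<Rightarrow> (complex ^ 'n) set
   \<Rightarrow> (complex ^ 'n \<Rightarrow> complex ^ 'm)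
   \<Rightarrow> (complex ^ 'n \<Rightarrow> complex ^ 'n \<Rightarrow> complex ^ 'm) \<Rightarrow> bool" where
  "C1alpha_extension f \<alpha> V g g' \<longleftrightarrow>
     open V \<and>
     (\<forall>z \<in> polydisc \<inter> V. g z = f z) \<and>
     (\<forall>x \<in> closure polydisc \<inter> V. (g has_derivative g' x) (at x within (closure polydisc \<inter> V))) \<and>
     (\<forall>e \<in> Basis. continuous_on (closure polydisc \<inter> V) (\<lambda>x. g' x e)) \<and>
     (\<exists>C. \<forall>e \<in> Basis. \<forall>x \<in> closure polydisc \<inter> V. \<forall>y \<in> closure polydisc \<inter> V.
          norm (g' x e - g' y e) \<le> C * dist x y powr \<alpha>)"

text \<open>Complex Jacobian entry (d g_i / d z_j)(z0) via the Wirtinger operator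
  (1/2)(d/dx_j - i d/dy_j) applied to the real derivative g' z0.\<close>
definition cjac ::
  "(complex ^ 'n::finite \<Rightarrow> complex ^ 'n \<Rightarrow> complex ^ 'm::finite) \<Rightarrow> complex ^ 'n
   \<Rightarrow> 'm \<Rightarrow> 'n \<Rightarrow> complex" where
  "cjac g' z0 i j = (g' z0 (axis j 1) $ i - \<i> * g' z0 (axis j \<i>) $ i) / 2"

end

theory Submission
  imports Defs "HOL-Complex_Analysis.Conformal_Mappings"
begin

(* Restricted to the complex line through z0, f becomes a holomorphic map from the unit disc
   into the ball.  The Schwarz-Pick lemma for such maps (the one-variable Schwarz lemma composed
   with the automorphism of the ball moving a = f 0 to 0) gives
     tau (2 - tau) |1 - <f((1 - tau) z0), a>|^2 <= (1 - |a|^2) (1 - |f((1 - tau) z0)|^2);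
   dividing by tau and letting tau -> 0+ yields the Julia-type bound  lambda <= Re <D z0, w0>,
   where D is the derivative of the C^1 extension at z0.  On the other hand Re <g, w0> <= 1 on
   the closed polydisc with equality at z0, so its derivative in every direction pointing into
   the closed polydisc is nonpositive.  Testing coordinate directions shows that the j-th entry
   of conj(J)^T w0 vanishes when |z0_j| < 1 and is a nonnegative multiple of z0_j when
   |z0_j| = 1.  Dividing these multiples by lambda gives the gamma_j, and their sum is
   Re <D z0, w0> / lambda >= 1. *)

definition cinner :: "complex ^ 'm::finite \<Rightarrow> complex ^ 'm \<Rightarrow> complex" where
  "cinner x y = (\<Sum>i\<in>UNIV. x $ i * cnj (y $ i))"

lemma cinner_diff_left: "cinner (x - y) z = cinner x z - cinner y z"
  by (simp add: cinner_def sum_subtractf left_diff_distrib)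

lemma cinner_diff_right: "cinner z (x - y) = cinner z x - cinner z y"
  by (simp add: cinner_def sum_subtractf right_diff_distrib)

lemma cinner_scale_left: "cinner (c *s x) y = c * cinner x y"
  by (simp add: cinner_def sum_distrib_left mult.assoc)

lemma cinner_scale_right: "cinner x (c *s y) = cnj c * cinner x y"
  by (simp add: cinner_def sum_distrib_left algebra_simps)

lemma cnj_cinner: "cnj (cinner x y) = cinner y x"
  by (simp add: cinner_def mult.commute)

lemma cinner_sum_left: "cinner (\<Sum>j\<in>A. x j) y = (\<Sum>j\<in>A. cinner (x j) y)"
  by (simp add: cinner_def sum_component sum_distrib_right sum.swap[of _ A])

lemma inner_eq_Re_cinner: "inner x y = Re (cinner x y)"
  by (simp add: cinner_def inner_vec_def inner_complex_def Re_sum)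

lemma cinner_self: "cinner x x = of_real ((norm x)\<^sup>2)"
proof -
  have "cinner x x = (\<Sum>i\<in>UNIV. of_real ((norm (x $ i))\<^sup>2))"
    unfolding cinner_def by (simp add: complex_norm_square flip: of_real_power)
  then show ?thesis
    by (simp add: norm_vec_def L2_set_def sum_nonneg)
qed

lemma norm_vector_smult: "norm (c *s x) = cmod c * norm (x :: complex ^ 'm::finite)"
proof -
  have "of_real ((norm (c *s x))\<^sup>2) = (of_real ((cmod c * norm x)\<^sup>2) :: complex)"
    by (simp only: cinner_self[symmetric] cinner_scale_left cinner_scale_right)
       (simp add: cinner_self complex_norm_square power_mult_distrib mult.commute flip: of_real_power)
  then show ?thesis
    by (simp only: of_real_eq_iff power2_eq_iff_nonneg norm_ge_zero zero_le_mult_iff) simp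
qed

lemma norm_cinner_le: "cmod (cinner x y) \<le> norm x * norm y"
proof -
  have "cmod (cinner x y) \<le> (\<Sum>i\<in>UNIV. \<bar>norm (x $ i)\<bar> * \<bar>norm (y $ i)\<bar>)"
    unfolding cinner_def by (rule order_trans[OF norm_sum]) (simp add: norm_mult)
  also have "\<dots> \<le> norm x * norm y"
    unfolding norm_vec_def by (rule L2_set_mult_ineq)
  finally show ?thesis .
qed

lemma norm_cinner_lt1:
  assumes "norm x < 1" "norm y < 1"
  shows "cmod (cinner x y) < 1"
  using norm_cinner_le[of x y] assms
  by (smt (verit) mult_le_one norm_ge_zero mult_strict_mono mult_1_left)

lemma julia_quotient_pos:
  assumes "norm a < 1" "norm w = 1"
  shows "(cmod (1 - cinner w a))\<^sup>2 / (1 - (norm a)\<^sup>2) > 0"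
proof -
  have "cmod (cinner w a) < 1"
    using norm_cinner_le[of w a] assms by simp
  then have "1 - cinner w a \<noteq> 0"
    by auto
  then show ?thesis
    using assms(1) by (simp add: abs_square_less_1)
qed

lemma holomorphic_on_cinner:
  assumes "\<And>i. (\<lambda>\<zeta>. u \<zeta> $ i) holomorphic_on S"
  shows "(\<lambda>\<zeta>. cinner (u \<zeta>) y) holomorphic_on S"
  unfolding cinner_def by (intro holomorphic_intros assms)

lemma schwarz_lemma_ball:
  fixes h :: "complex \<Rightarrow> complex ^ 'm::finite"
  assumes hol: "\<And>i. (\<lambda>\<zeta>. h \<zeta> $ i) holomorphic_on ball 0 1" and "h 0 = 0"
    and into: "\<And>\<zeta>. norm \<zeta> < 1 \<Longrightarrow> norm (h \<zeta>) < 1" and "norm \<zeta> < 1"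
  shows "norm (h \<zeta>) \<le> norm \<zeta>"
proof (cases "h \<zeta> = 0")
  case False
  define G where "G \<xi> = cinner (h \<xi>) (h \<zeta>) / of_real (norm (h \<zeta>))" for \<xi>
  have "G holomorphic_on ball 0 1"
    unfolding G_def by (intro holomorphic_intros holomorphic_on_cinner hol) (use False in auto)
  moreover have "G 0 = 0"
    by (simp add: G_def cinner_def \<open>h 0 = 0\<close>)
  moreover have "norm (G \<xi>) < 1" if "norm \<xi> < 1" for \<xi>
  proof -
    have "cmod (cinner (h \<xi>) (h \<zeta>)) < norm (h \<zeta>)"
      using norm_cinner_le[of "h \<xi>" "h \<zeta>"] into[OF that] False
      by (smt (verit) mult_less_cancel_right2 zero_less_norm_iff)
    then show ?thesis
      using False by (simp add: G_def norm_divide)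
  qed
  ultimately have "norm (G \<zeta>) \<le> norm \<zeta>"
    using Schwarz_Lemma(1) \<open>norm \<zeta> < 1\<close> by blast
  moreover have "G \<zeta> = of_real (norm (h \<zeta>))"
    using False by (simp add: G_def cinner_self power2_eq_square)
  ultimately show ?thesis
    by simp
qed simp

(* Numerator of the involution phi_b(v) = N_b(v) / (1 - <v,b>) of the unit ball exchanging b
   and 0 (Rudin, Function Theory in the Unit Ball, 2.2.1).  The usual coefficient
   (1 - s) / |b|^2 of the projection onto b is written as 1 / (1 + s), s = sqrt (1 - |b|^2),
   which also covers b = 0. *)
definition ball_moebius_num :: "complex ^ 'm::finite \<Rightarrow> complex ^ 'm \<Rightarrow> complex ^ 'm" where
  "ball_moebius_num b v =
     (1 - cinner v b / of_real (1 + sqrt (1 - (norm b)\<^sup>2))) *s b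
     - of_real (sqrt (1 - (norm b)\<^sup>2)) *s v"

lemma ball_moebius_num_self:
  assumes "norm b \<le> 1"
  shows "ball_moebius_num b b = 0"
proof -
  define s where "s = sqrt (1 - (norm b)\<^sup>2)"
  have "s \<ge> 0" "s\<^sup>2 = 1 - (norm b)\<^sup>2"
    using assms by (simp_all add: s_def abs_square_le_1)
  then have "1 - (norm b)\<^sup>2 / (1 + s) = s"
    by (simp add: field_simps power2_eq_square)
  then have "1 - of_real ((norm b)\<^sup>2) / of_real (1 + s) = (of_real s :: complex)"
    by (metis of_real_1 of_real_diff of_real_divide)
  then show ?thesis
    by (simp add: ball_moebius_num_def cinner_self s_def[symmetric])
qed

lemma norm_ball_moebius_num:
  assumes "norm b \<le> 1"
  shows "(norm (ball_moebius_num b v))\<^sup>2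
           = (cmod (1 - cinner v b))\<^sup>2 - (1 - (norm b)\<^sup>2) * (1 - (norm v)\<^sup>2)"
proof -
  define s where "s = sqrt (1 - (norm b)\<^sup>2)"
  define c where "c = cinner v b"
  define u where "u = c / of_real (1 + s)"
  have s: "s \<ge> 0" "(norm b)\<^sup>2 = 1 - s\<^sup>2"
    using assms by (simp_all add: s_def abs_square_le_1)
  then have "(of_real (1 + s) :: complex) \<noteq> 0"
    by (simp only: of_real_eq_0_iff)
  then have c: "c = of_real (1 + s) * u"
    by (simp add: u_def)
  have "of_real ((norm (ball_moebius_num b v))\<^sup>2)
          = cinner ((1 - u) *s b - of_real s *s v) ((1 - u) *s b - of_real s *s v)"
    by (simp only: cinner_self ball_moebius_num_def s_def c_def u_def)
  also have "\<dots> = (1 - u) * cnj (1 - u) * (norm b)\<^sup>2 - (1 - u) * s * cnj c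
                     - s * cnj (1 - u) * c + s\<^sup>2 * (norm v)\<^sup>2"
    by (simp only: cinner_diff_left cinner_diff_right cinner_scale_left cinner_scale_right
        cinner_self[of b] cinner_self[of v] cnj_cinner c_def complex_cnj_complex_of_real
        of_real_power) (simp add: algebra_simps power2_eq_square)
  also have "\<dots> = of_real ((cmod (1 - c))\<^sup>2 - (1 - (norm b)\<^sup>2) * (1 - (norm v)\<^sup>2))"
    unfolding s(2) of_real_diff of_real_mult complex_norm_square c
    by (simp add: algebra_simps power2_eq_square)
  finally show ?thesis
    by (simp only: of_real_eq_iff c_def)
qed

lemma schwarz_pick_ball:
  fixes u :: "complex \<Rightarrow> complex ^ 'm::finite"
  assumes hol: "\<And>i. (\<lambda>\<zeta>. u \<zeta> $ i) holomorphic_on ball 0 1"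
    and into: "\<And>\<zeta>. norm \<zeta> < 1 \<Longrightarrow> norm (u \<zeta>) < 1" and \<zeta>: "norm \<zeta> < 1"
  shows "(1 - (norm \<zeta>)\<^sup>2) * (cmod (1 - cinner (u \<zeta>) (u 0)))\<^sup>2
           \<le> (1 - (norm (u 0))\<^sup>2) * (1 - (norm (u \<zeta>))\<^sup>2)"
proof -
  define b where "b = u 0"
  define h where "h \<xi> = (1 / (1 - cinner (u \<xi>) b)) *s ball_moebius_num b (u \<xi>)" for \<xi>
  have b: "norm b < 1"
    using into[of 0] by (simp add: b_def)
  have denom: "1 - cinner (u \<xi>) b \<noteq> 0" if "norm \<xi> < 1" for \<xi>
    using norm_cinner_lt1[OF into[OF that] b] by auto
  have norm_h: "norm (h \<xi>) = norm (ball_moebius_num b (u \<xi>)) / cmod (1 - cinner (u \<xi>) b)" for \<xi>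
    by (simp add: h_def norm_vector_smult norm_divide)
  have "norm (h \<zeta>) \<le> norm \<zeta>"
  proof (rule schwarz_lemma_ball)
    show "(\<lambda>\<xi>. h \<xi> $ i) holomorphic_on ball 0 1" for i
      unfolding h_def ball_moebius_num_def
      by (simp, intro holomorphic_intros holomorphic_on_cinner hol) (use denom in auto)
    show "h 0 = 0"
      using b by (simp add: h_def b_def[symmetric] ball_moebius_num_self)
    show "norm (h \<xi>) < 1" if "norm \<xi> < 1" for \<xi>
    proof -
      have "(norm (ball_moebius_num b (u \<xi>)))\<^sup>2 < (cmod (1 - cinner (u \<xi>) b))\<^sup>2"
        using norm_ball_moebius_num[of b "u \<xi>"] b into[OF that]
        by (simp add: abs_square_less_1)
      then show ?thesis
        using denom[OF that] by (simp add: norm_h power_less_imp_less_base)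
    qed
  qed fact
  then have "(norm (ball_moebius_num b (u \<zeta>)))\<^sup>2 \<le> (norm \<zeta>)\<^sup>2 * (cmod (1 - cinner (u \<zeta>) b))\<^sup>2"
    using denom[OF \<zeta>] by (simp add: norm_h divide_le_eq power_mono flip: power_mult_distrib)
  then show ?thesis
    using norm_ball_moebius_num[of b "u \<zeta>"] b by (simp add: b_def algebra_simps)
qed

lemma open_polydisc: "open (polydisc :: (complex ^ 'n::finite) set)"
proof -
  have eq: "polydisc = (\<Inter>j. {z :: complex ^ 'n. cmod (z $ j) < 1})"
    by (auto simp: polydisc_def)
  show ?thesis
    unfolding eq by (intro open_INT ballI open_Collect_less continuous_intros) simp
qed

lemma smult_in_polydisc:
  assumes "\<forall>j. cmod (z $ j) \<le> 1" "cmod c < 1"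
  shows "c *s z \<in> polydisc"
proof -
  have "cmod (c * z $ j) \<le> cmod c" for j
    using assms(1) by (simp add: norm_mult mult_left_le)
  then show ?thesis
    using assms(2) by (auto simp: polydisc_def intro: le_less_trans)
qed

lemma closure_polydisc:
  "closure (polydisc :: (complex ^ 'n::finite) set) = {z. \<forall>j. cmod (z $ j) \<le> 1}"
    (is "_ = ?K")
proof (rule subset_antisym)
  have "polydisc \<subseteq> ?K"
    by (auto simp: polydisc_def less_imp_le)
  moreover have "closed ?K"
    by (intro closed_Collect_all closed_Collect_le continuous_intros)
  ultimately show "closure polydisc \<subseteq> ?K"
    by (rule closure_minimal)
next
  show "?K \<subseteq> closure polydisc"
  proof
    fix z
    assume z: "z \<in> ?K"
    show "z \<in> closure polydisc"
    proof (cases "z = 0")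
      case False
      have "open_segment 0 z \<subseteq> polydisc"
      proof
        fix x
        assume "x \<in> open_segment 0 z"
        then obtain u :: real where "0 < u" "u < 1" "x = u *\<^sub>R z"
          by (auto simp: in_segment)
        then have "x = (of_real u :: complex) *s z"
          by (simp add: vec_eq_iff) (simp add: scaleR_conv_of_real)
        then show "x \<in> polydisc"
          using z \<open>0 < u\<close> \<open>u < 1\<close> by (simp add: smult_in_polydisc)
      qed
      then have "closure (open_segment 0 z) \<subseteq> closure polydisc"
        by (rule closure_mono)
      then have "closed_segment 0 z \<subseteq> closure polydisc"
        using False by (simp add: closure_open_segment)
      then show ?thesis
        by auto
    qed (simp add: polydisc_def closure_subset[THEN subsetD])
  qed
qed

lemma holomorphic_on_polydisc_slice:
  fixes f :: "complex ^ 'n::finite \<Rightarrow> complex ^ 'm::finite"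
  assumes f: "holo_vec_on f polydisc" and z: "\<forall>j. cmod (z $ j) \<le> 1"
  shows "(\<lambda>\<zeta>. f (\<zeta> *s z) $ i) holomorphic_on ball 0 1"
  unfolding holomorphic_on_open[OF open_ball]
proof
  fix \<zeta> :: complex
  assume "\<zeta> \<in> ball 0 1"
  then have "\<zeta> *s z \<in> polydisc"
    using z by (intro smult_in_polydisc) auto
  then obtain L where L: "(f has_derivative L) (at (\<zeta> *s z))"
    and L_cmult: "\<forall>c h. L (c *s h) = c *s L h"
    using f unfolding holo_vec_on_def by blast
  have "linear (\<lambda>\<xi>::complex. \<xi> *s z)"
    by (rule linearI) (auto simp: vec_eq_iff algebra_simps)
  then have "((\<lambda>\<xi>. \<xi> *s z) has_derivative (\<lambda>\<xi>. \<xi> *s z)) (at \<zeta>)"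
    by (simp add: linear_conv_bounded_linear bounded_linear_imp_has_derivative)
  then have "((f \<circ> (\<lambda>\<xi>. \<xi> *s z)) has_derivative (L \<circ> (\<lambda>\<xi>. \<xi> *s z))) (at \<zeta>)"
    using L by (rule diff_chain_at)
  then have "((\<lambda>\<xi>. f (\<xi> *s z) $ i) has_derivative (\<lambda>\<xi>. L (\<xi> *s z) $ i)) (at \<zeta>)"
    using bounded_linear.has_derivative[OF bounded_linear_vec_nth] by (fastforce simp: o_def)
  moreover have "(\<lambda>\<xi>. L (\<xi> *s z) $ i) = (*) (L z $ i)"
    using L_cmult by (auto simp: mult.commute)
  ultimately show "\<exists>f'. ((\<lambda>\<xi>. f (\<xi> *s z) $ i) has_field_derivative f') (at \<zeta>)"
    by (auto simp: has_field_derivative_def)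
qed

lemma right_derivative_bound:
  fixes \<phi> \<psi> :: "real \<Rightarrow> real"
  assumes \<phi>: "(\<phi> has_real_derivative \<phi>') (at 0 within {0<..<d})" and "d > 0"
    and "(\<psi> \<longlongrightarrow> l) (at 0 within {0<..<d})"
    and le: "\<And>\<tau>. \<tau> \<in> {0<..<d} \<Longrightarrow> \<tau> * \<psi> \<tau> \<le> \<phi> 0 - \<phi> \<tau>"
  shows "l \<le> - \<phi>'"
proof (rule tendsto_le)
  show "\<not> trivial_limit (at (0::real) within {0<..<d})"
    using \<open>d > 0\<close> by (simp add: trivial_limit_within islimpt_greaterThanLessThan1)
  show "(\<psi> \<longlongrightarrow> l) (at 0 within {0<..<d})"
    by fact
  show "((\<lambda>\<tau>. (\<phi> 0 - \<phi> \<tau>) / \<tau>) \<longlongrightarrow> - \<phi>') (at 0 within {0<..<d})"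
    using tendsto_minus[OF \<phi>[unfolded has_field_derivative_iff]] by (simp add: minus_divide_left)
  show "\<forall>\<^sub>F \<tau> in at 0 within {0<..<d}. \<psi> \<tau> \<le> (\<phi> 0 - \<phi> \<tau>) / \<tau>"
    using le by (auto simp: eventually_at_filter pos_le_divide_eq mult.commute intro: always_eventually)
qed

lemma has_vector_derivative_along_ray:
  assumes "(g has_derivative D) (at z within S)" and "\<And>\<tau>. \<tau> \<in> T \<Longrightarrow> z + \<tau> *\<^sub>R v \<in> S"
  shows "((\<lambda>\<tau>. g (z + \<tau> *\<^sub>R v)) has_vector_derivative D v) (at 0 within T)"
proof -
  have "((\<lambda>\<tau>. z + \<tau> *\<^sub>R v) has_vector_derivative v) (at 0 within T)"
    by (auto intro!: derivative_eq_intros)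
  moreover have "(\<lambda>\<tau>. z + \<tau> *\<^sub>R v) ` T \<subseteq> S"
    using assms(2) by auto
  then have "(g has_derivative D) (at (z + 0 *\<^sub>R v) within (\<lambda>\<tau>. z + \<tau> *\<^sub>R v) ` T)"
    using has_derivative_subset[OF assms(1)] by simp
  ultimately show ?thesis
    using vector_derivative_diff_chain_within by (fastforce simp: o_def)
qed

(* Only the C^1 part of the C^(1+alpha) hypothesis is used. *)
locale boundary_contact =
  fixes f :: "complex ^ 'n::finite \<Rightarrow> complex ^ 'm::finite"
    and z0 :: "complex ^ 'n" and w0 :: "complex ^ 'm" and V :: "(complex ^ 'n) set"
    and g :: "complex ^ 'n \<Rightarrow> complex ^ 'm" and g' :: "complex ^ 'n \<Rightarrow> complex ^ 'n \<Rightarrow> complex ^ 'm"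
  assumes holo: "holo_vec_on f polydisc"
    and into_ball: "f ` polydisc \<subseteq> ball 0 1"
    and z0_frontier: "z0 \<in> frontier polydisc"
    and open_V: "open V" and z0_V: "z0 \<in> V"
    and g_eq_f: "\<And>z. z \<in> polydisc \<inter> V \<Longrightarrow> g z = f z"
    and g_deriv: "\<And>x. x \<in> closure polydisc \<inter> V
                    \<Longrightarrow> (g has_derivative g' x) (at x within closure polydisc \<inter> V)"
    and g'_cont: "\<And>e. e \<in> Basis \<Longrightarrow> continuous_on (closure polydisc \<inter> V) (\<lambda>x. g' x e)"
    and g_z0: "g z0 = w0" and norm_w0: "norm w0 = 1"
begin

abbreviation "S \<equiv> closure polydisc \<inter> V"

lemma z0_in_S: "z0 \<in> S"
  using z0_frontier z0_V by (simp add: frontier_def)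

lemma norm_z0_le: "cmod (z0 $ j) \<le> 1"
  using z0_in_S by (simp add: closure_polydisc)

lemma polydisc_Int_V_subset: "polydisc \<inter> V \<subseteq> S"
  using closure_subset[of polydisc] by blast

lemma continuous_on_S_into_closed:
  assumes "continuous_on S h" "h ` (polydisc \<inter> V) \<subseteq> C" "closed C" "x \<in> S"
  shows "h x \<in> C"
proof -
  have "closedin (top_of_set S) (S \<inter> h -` C)"
    using assms(1,3) by (rule continuous_closedin_preimage)
  then obtain K where "closed K" and K: "S \<inter> h -` C = S \<inter> K"
    by (auto simp: closedin_closed)
  have "polydisc \<inter> V \<subseteq> K"
    using polydisc_Int_V_subset assms(2) K by blast
  then have "closure (polydisc \<inter> V) \<subseteq> K"
    using \<open>closed K\<close> by (rule closure_minimal)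
  moreover have "x \<in> closure (polydisc \<inter> V)"
    using open_Int_closure_subset[OF open_V, of polydisc] assms(4) by (auto simp: Int_commute)
  ultimately show ?thesis
    using K assms(4) by blast
qed

lemma inner_g_w0_le:
  assumes "x \<in> S"
  shows "inner (g x) w0 \<le> 1"
proof -
  have "continuous_on S g"
    using g_deriv has_derivative_continuous continuous_on_eq_continuous_within by blast
  then have "continuous_on S (\<lambda>x. inner (g x) w0)"
    by (intro continuous_intros)
  moreover have "inner (g y) w0 \<le> 1" if "y \<in> polydisc \<inter> V" for y
    using norm_cauchy_schwarz[of "g y" w0] into_ball that g_eq_f[OF that] norm_w0 by auto
  ultimately have "inner (g x) w0 \<in> {..1}"
    using continuous_on_S_into_closed[OF _ _ closed_atMost assms] by auto
  then show ?thesis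
    by simp
qed

lemma continuous_on_g'_apply: "continuous_on S (\<lambda>x. g' x v)"
proof -
  have "g' x v = (\<Sum>e\<in>Basis. (v \<bullet> e) *\<^sub>R g' x e)" if "x \<in> S" for x
  proof -
    have "linear (g' x)"
      using g_deriv[OF that] by (rule has_derivative_linear)
    then show ?thesis
      by (subst euclidean_representation[of v, symmetric]) (simp add: linear_sum linear_scale)
  qed
  moreover have "continuous_on S (\<lambda>x. \<Sum>e\<in>Basis. (v \<bullet> e) *\<^sub>R g' x e)"
    by (intro continuous_intros g'_cont)
  ultimately show ?thesis
    using continuous_on_eq by force
qed

lemma g'_cmult_interior:
  assumes "x \<in> polydisc \<inter> V"
  shows "g' x (c *s v) = c *s g' x v"
proof -
  obtain L where L: "(f has_derivative L) (at x)" and L_cmult: "\<forall>c v. L (c *s v) = c *s L v"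
    using holo assms unfolding holo_vec_on_def by blast
  have "open (polydisc \<inter> V)"
    using open_polydisc open_V by blast
  with L have "(g has_derivative L) (at x)"
    using assms by (rule has_derivative_transform_within_open) (simp add: g_eq_f)
  moreover have "x \<in> interior S"
    using interior_maximal[OF polydisc_Int_V_subset \<open>open (polydisc \<inter> V)\<close>] assms
    by (rule subsetD)
  then have "(g has_derivative g' x) (at x)"
    using g_deriv[OF interior_subset[THEN subsetD]] by (simp only: at_within_interior)
  ultimately have "g' x = L"
    by (metis has_derivative_unique)
  then show ?thesis
    using L_cmult by simp
qed

(* g' z0 is only a derivative within the closed set S; its complex linearity comes from the
   interior by continuity of the partial derivatives. *)
lemma g'_z0_cmult: "g' z0 (c *s v) = c *s g' z0 v"
proof -
  have "continuous_on S (\<lambda>x. g' x (c *s v) - c *s g' x v)"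
    unfolding vector_scalar_mult_def
    by (intro continuous_intros continuous_on_g'_apply)
  then have "g' z0 (c *s v) - c *s g' z0 v \<in> {0}"
    using g'_cmult_interior by (intro continuous_on_S_into_closed[OF _ _ closed_singleton z0_in_S]) auto
  then show ?thesis
    by simp
qed

lemma cjac_eq: "cjac g' z0 i j = g' z0 (axis j 1) $ i"
proof -
  have "axis j \<i> = \<i> *s axis j (1::complex)"
    by (simp add: vec_eq_iff axis_def)
  then show ?thesis
    by (simp add: cjac_def g'_z0_cmult)
qed

lemma ray_in_S:
  assumes "d > 0" and "\<And>\<tau>. \<tau> \<in> {0<..<d} \<Longrightarrow> z0 + \<tau> *\<^sub>R v \<in> closure polydisc"
  obtains d' where "0 < d'" "d' \<le> d" "\<And>\<tau>. \<tau> \<in> {0<..<d'} \<Longrightarrow> z0 + \<tau> *\<^sub>R v \<in> S"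
proof -
  obtain e where "e > 0" and e: "ball z0 e \<subseteq> V"
    using open_V z0_V open_contains_ball by blast
  have "norm v + 1 > 0"
    by (simp add: add_nonneg_pos)
  define d' where "d' = min d (e / (norm v + 1))"
  show ?thesis
  proof (rule that[of d'])
    show "0 < d'" "d' \<le> d"
      using \<open>d > 0\<close> \<open>e > 0\<close> \<open>norm v + 1 > 0\<close> by (simp_all add: d'_def)
    fix \<tau>
    assume \<tau>: "\<tau> \<in> {0<..<d'}"
    have "\<tau> * norm v \<le> \<tau> * (norm v + 1)"
      using \<tau> by simp
    also have "\<dots> < e"
      using \<tau> \<open>norm v + 1 > 0\<close> by (simp add: d'_def pos_less_divide_eq)
    finally have "z0 + \<tau> *\<^sub>R v \<in> V"
      using \<tau> e by (auto simp: dist_norm)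
    moreover have "z0 + \<tau> *\<^sub>R v \<in> closure polydisc"
      using \<tau> assms(2) by (simp add: d'_def)
    ultimately show "z0 + \<tau> *\<^sub>R v \<in> S"
      by simp
  qed
qed

(* Re <g, w0> attains its maximum 1 over S at z0. *)
lemma inner_g'_z0_nonpos:
  assumes "d > 0" and "\<And>\<tau>. \<tau> \<in> {0<..<d} \<Longrightarrow> z0 + \<tau> *\<^sub>R v \<in> closure polydisc"
  shows "inner (g' z0 v) w0 \<le> 0"
proof -
  obtain d' where "0 < d'" and ray: "\<And>\<tau>. \<tau> \<in> {0<..<d'} \<Longrightarrow> z0 + \<tau> *\<^sub>R v \<in> S"
    using ray_in_S[OF assms] by blast
  have "((\<lambda>\<tau>. g (z0 + \<tau> *\<^sub>R v)) has_vector_derivative g' z0 v) (at 0 within {0<..<d'})"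
    using g_deriv[OF z0_in_S] ray by (rule has_vector_derivative_along_ray)
  then have "((\<lambda>\<tau>. inner (g (z0 + \<tau> *\<^sub>R v)) w0) has_real_derivative inner (g' z0 v) w0)
               (at 0 within {0<..<d'})"
    unfolding has_real_derivative_iff_has_vector_derivative
    by (rule bounded_linear.has_vector_derivative[OF bounded_linear_inner_left])
  then have "0 \<le> - inner (g' z0 v) w0"
  proof (rule right_derivative_bound[where \<psi> = "\<lambda>_. 0"])
    show "\<tau> * 0 \<le> inner (g (z0 + 0 *\<^sub>R v)) w0 - inner (g (z0 + \<tau> *\<^sub>R v)) w0"
      if "\<tau> \<in> {0<..<d'}" for \<tau>
      using inner_g_w0_le[OF ray[OF that]] g_z0 norm_w0 by (simp add: dot_square_norm)
  qed (use \<open>0 < d'\<close> in auto)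
  then show ?thesis
    by simp
qed

definition \<psi> :: "'n \<Rightarrow> complex" where
  "\<psi> j = cinner (g' z0 (axis j 1)) w0"

lemma Re_mult_\<psi>_nonpos:
  assumes "d > 0" and "\<And>\<tau>. \<tau> \<in> {0<..<d} \<Longrightarrow> cmod (z0 $ j + \<tau> *\<^sub>R c) \<le> 1"
  shows "Re (c * \<psi> j) \<le> 0"
proof -
  have "z0 + \<tau> *\<^sub>R axis j c \<in> closure polydisc" if "\<tau> \<in> {0<..<d}" for \<tau>
    using assms(2)[OF that] norm_z0_le by (simp add: closure_polydisc axis_def)
  then have "inner (g' z0 (axis j c)) w0 \<le> 0"
    by (rule inner_g'_z0_nonpos[OF assms(1)])
  moreover have "axis j c = c *s axis j 1"
    by (simp add: vec_eq_iff axis_def)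
  ultimately show ?thesis
    by (simp add: g'_z0_cmult inner_eq_Re_cinner cinner_scale_left \<psi>_def)
qed

lemma \<psi>_interior:
  assumes "cmod (z0 $ j) < 1"
  shows "\<psi> j = 0"
proof -
  have "Re (c * \<psi> j) \<le> 0" if "cmod c = 1" for c
  proof (rule Re_mult_\<psi>_nonpos)
    show "1 - cmod (z0 $ j) > 0"
      using assms by simp
    show "cmod (z0 $ j + \<tau> *\<^sub>R c) \<le> 1" if "\<tau> \<in> {0<..<1 - cmod (z0 $ j)}" for \<tau>
      using norm_triangle_ineq[of "z0 $ j" "\<tau> *\<^sub>R c"] that \<open>cmod c = 1\<close> by simp
  qed
  from this[of 1] this[of "-1"] this[of \<i>] this[of "-\<i>"] show ?thesis
    by (simp add: complex_eq_iff)
qed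

(* The directions z0_j (-1 + i s), s real, point into the closed unit disc at z0_j. *)
lemma \<psi>_boundary:
  assumes "cmod (z0 $ j) = 1"
  shows "Im (z0 $ j * \<psi> j) = 0" and "Re (z0 $ j * \<psi> j) \<ge> 0"
proof -
  define W where "W = z0 $ j * \<psi> j"
  have "Re (z0 $ j * (-1 + \<i> * of_real s) * \<psi> j) \<le> 0" for s :: real
  proof (rule Re_mult_\<psi>_nonpos)
    show "1 / (1 + s\<^sup>2) > 0"
      by (simp add: add_pos_nonneg)
    fix \<tau> :: real
    assume \<tau>: "\<tau> \<in> {0<..<1 / (1 + s\<^sup>2)}"
    then have "\<tau> * (\<tau> * (1 + s\<^sup>2)) \<le> \<tau>"
      by (simp add: pos_less_divide_eq add_pos_nonneg mult_left_le less_imp_le)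
    then have "(1 - \<tau>)\<^sup>2 + (\<tau> * s)\<^sup>2 \<le> 1"
      using \<tau> by (simp add: power2_eq_square algebra_simps)
    then have "cmod (Complex (1 - \<tau>) (\<tau> * s)) \<le> 1"
      by (simp add: cmod_def)
    moreover have "z0 $ j + \<tau> *\<^sub>R (z0 $ j * (-1 + \<i> * of_real s)) = z0 $ j * Complex (1 - \<tau>) (\<tau> * s)"
      by (simp add: scaleR_conv_of_real Complex_eq algebra_simps)
    ultimately show "cmod (z0 $ j + \<tau> *\<^sub>R (z0 $ j * (-1 + \<i> * of_real s))) \<le> 1"
      using assms by (simp add: norm_mult)
  qed
  then have W: "- Re W - s * Im W \<le> 0" for s
    by (simp add: W_def algebra_simps)
  show "Im W = 0"
  proof (rule ccontr)
    assume "Im W \<noteq> 0"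
    then show False
      using W[of "- (Re W + 1) / Im W"] by (simp add: field_simps)
  qed
  show "Re W \<ge> 0"
    using W[of 0] by simp
qed

lemma radial_schwarz_pick:
  assumes "0 < \<tau>" "\<tau> < 1"
  shows "\<tau> * (2 - \<tau>) * (cmod (1 - cinner (f (of_real (1 - \<tau>) *s z0)) (f 0)))\<^sup>2
           \<le> (1 - (norm (f 0))\<^sup>2) * (1 - (norm (f (of_real (1 - \<tau>) *s z0)))\<^sup>2)"
proof -
  have into: "norm (f (\<zeta> *s z0)) < 1" if "norm \<zeta> < 1" for \<zeta>
    using into_ball smult_in_polydisc[of z0 \<zeta>] norm_z0_le that by auto
  define \<zeta> :: complex where "\<zeta> = of_real (1 - \<tau>)"
  have "norm \<zeta> = 1 - \<tau>"
    unfolding \<zeta>_def norm_of_real using assms by simp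
  then have "(1 - (norm \<zeta>)\<^sup>2) * (cmod (1 - cinner (f (\<zeta> *s z0)) (f (0 *s z0))))\<^sup>2
               \<le> (1 - (norm (f (0 *s z0)))\<^sup>2) * (1 - (norm (f (\<zeta> *s z0)))\<^sup>2)"
    using assms norm_z0_le
    by (intro schwarz_pick_ball[where u = "\<lambda>\<zeta>. f (\<zeta> *s z0)"] holomorphic_on_polydisc_slice holo into)
       auto
  moreover have "1 - (1 - \<tau>)\<^sup>2 = \<tau> * (2 - \<tau>)"
    by (simp add: power2_eq_square algebra_simps)
  ultimately show ?thesis
    using \<open>norm \<zeta> = 1 - \<tau>\<close> by (simp add: \<zeta>_def)
qed

lemma julia_bound:
  "(cmod (1 - cinner w0 (f 0)))\<^sup>2 / (1 - (norm (f 0))\<^sup>2) \<le> inner (g' z0 z0) w0"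
proof -
  define a where "a = f 0"
  define \<gamma> where "\<gamma> \<tau> = z0 + \<tau> *\<^sub>R (- z0)" for \<tau>
  have \<gamma>_eq: "\<gamma> \<tau> = of_real (1 - \<tau>) *s z0" for \<tau>
    by (simp add: \<gamma>_def vec_eq_iff) (simp add: scaleR_conv_of_real algebra_simps)
  have \<gamma>_polydisc: "\<gamma> \<tau> \<in> polydisc" if "\<tau> \<in> {0<..<1}" for \<tau>
    unfolding \<gamma>_eq using that norm_z0_le norm_of_real[where 'a=complex, of "1 - \<tau>"]
    by (intro smult_in_polydisc) auto
  then have "z0 + \<tau> *\<^sub>R - z0 \<in> closure polydisc" if "\<tau> \<in> {0<..<1}" for \<tau>
    using closure_subset[of polydisc] that unfolding \<gamma>_def by blast
  then obtain d where "0 < d" "d \<le> 1" and \<gamma>_S: "\<And>\<tau>. \<tau> \<in> {0<..<d} \<Longrightarrow> \<gamma> \<tau> \<in> S"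
    unfolding \<gamma>_def by (rule ray_in_S[OF zero_less_one]) auto
  have "norm a < 1"
    using into_ball by (force simp: a_def polydisc_def)
  then have a: "1 - (norm a)\<^sup>2 > 0"
    by (simp add: abs_square_less_1)
  have "((\<lambda>\<tau>. g (\<gamma> \<tau>)) has_vector_derivative g' z0 (- z0)) (at 0 within {0<..<d})"
    unfolding \<gamma>_def
    by (rule has_vector_derivative_along_ray[OF g_deriv[OF z0_in_S]]) (use \<gamma>_S in \<open>simp add: \<gamma>_def\<close>)
  moreover have "g' z0 (- z0) = - g' z0 z0"
    by (rule linear_neg[OF has_derivative_linear[OF g_deriv[OF z0_in_S]]])
  ultimately have g\<gamma>_deriv: "((\<lambda>\<tau>. g (\<gamma> \<tau>)) has_vector_derivative - g' z0 z0) (at 0 within {0<..<d})"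
    by simp
  have g\<gamma>_0: "g (\<gamma> 0) = w0"
    by (simp add: \<gamma>_def g_z0)
  have "((\<lambda>\<tau>. (norm (g (\<gamma> \<tau>)))\<^sup>2) has_real_derivative - 2 * inner (g' z0 z0) w0)
          (at 0 within {0<..<d})"
    using bounded_bilinear.has_vector_derivative[OF bounded_bilinear_inner g\<gamma>_deriv g\<gamma>_deriv]
    by (simp add: has_real_derivative_iff_has_vector_derivative power2_norm_eq_inner g\<gamma>_0
        inner_commute)
  moreover have "((\<lambda>\<tau>. (2 - \<tau>) * (cmod (1 - cinner (g (\<gamma> \<tau>)) a))\<^sup>2 / (1 - (norm a)\<^sup>2))
                    \<longlongrightarrow> (2 - 0) * (cmod (1 - cinner w0 a))\<^sup>2 / (1 - (norm a)\<^sup>2))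
                  (at 0 within {0<..<d})"
  proof -
    have "((\<lambda>\<tau>. g (\<gamma> \<tau>)) \<longlongrightarrow> w0) (at 0 within {0<..<d})"
      using has_vector_derivative_continuous[OF g\<gamma>_deriv] g\<gamma>_0 by (simp add: continuous_within)
    then show ?thesis
      using a unfolding cinner_def by (intro tendsto_intros) auto
  qed
  moreover have "\<tau> * ((2 - \<tau>) * (cmod (1 - cinner (g (\<gamma> \<tau>)) a))\<^sup>2 / (1 - (norm a)\<^sup>2))
                   \<le> (norm (g (\<gamma> 0)))\<^sup>2 - (norm (g (\<gamma> \<tau>)))\<^sup>2"
    if \<tau>: "\<tau> \<in> {0<..<d}" for \<tau>
  proof -
    have "g (\<gamma> \<tau>) = f (of_real (1 - \<tau>) *s z0)"
      using g_eq_f \<gamma>_S[OF \<tau>] \<gamma>_polydisc \<tau> \<open>d \<le> 1\<close> by (simp add: \<gamma>_eq)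
    then have "\<tau> * (2 - \<tau>) * (cmod (1 - cinner (g (\<gamma> \<tau>)) a))\<^sup>2
                 \<le> (1 - (norm a)\<^sup>2) * (1 - (norm (g (\<gamma> \<tau>)))\<^sup>2)"
      unfolding a_def using \<tau> \<open>d \<le> 1\<close> by (simp only:) (rule radial_schwarz_pick; simp)
    then have "\<tau> * (2 - \<tau>) * (cmod (1 - cinner (g (\<gamma> \<tau>)) a))\<^sup>2 / (1 - (norm a)\<^sup>2)
                 \<le> 1 - (norm (g (\<gamma> \<tau>)))\<^sup>2"
      using a by (simp add: pos_divide_le_eq mult.commute)
    then show ?thesis
      using g\<gamma>_0 norm_w0 by simp
  qed
  ultimately have "(2 - 0) * (cmod (1 - cinner w0 a))\<^sup>2 / (1 - (norm a)\<^sup>2)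
                     \<le> - (- 2 * inner (g' z0 z0) w0)"
    by (rule right_derivative_bound[OF _ \<open>0 < d\<close>])
  then show ?thesis
    by (simp add: a_def)
qed

lemma Re_z0_\<psi>_nonneg: "Re (z0 $ j * \<psi> j) \<ge> 0"
  using \<psi>_boundary(2)[of j] \<psi>_interior[of j] norm_z0_le[of j] by force

lemma conj_jacobian_column:
  "(\<Sum>i\<in>UNIV. cnj (cjac g' z0 i j) * w0 $ i) = of_real (Re (z0 $ j * \<psi> j)) * z0 $ j"
proof -
  have lhs: "(\<Sum>i\<in>UNIV. cnj (cjac g' z0 i j) * w0 $ i) = cnj (\<psi> j)"
    by (simp add: cjac_eq \<psi>_def cinner_def mult.commute)
  show ?thesis
  proof (cases "cmod (z0 $ j) = 1")
    case True
    define W where "W = z0 $ j * \<psi> j"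
    have "cnj (z0 $ j) * z0 $ j = 1"
      using True by (simp add: complex_norm_square[symmetric] mult.commute)
    then have "\<psi> j = cnj (z0 $ j) * W"
      by (simp add: W_def mult.assoc[symmetric])
    moreover have "W = of_real (Re W)"
      using \<psi>_boundary(1)[OF True] by (simp add: W_def complex_eq_iff)
    ultimately have "cnj (\<psi> j) = of_real (Re W) * z0 $ j"
      by (metis complex_cnj_cnj complex_cnj_complex_of_real complex_cnj_mult mult.commute)
    then show ?thesis
      using lhs by (simp add: W_def)
  next
    case False
    then have "\<psi> j = 0"
      using \<psi>_interior norm_z0_le[of j] by simp
    then show ?thesis
      using lhs by simp
  qed
qed

lemma sum_Re_z0_\<psi>:
  "(\<Sum>j\<in>{j. cmod (z0 $ j) = 1}. Re (z0 $ j * \<psi> j)) = inner (g' z0 z0) w0"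
proof -
  have "linear (g' z0)"
    using g_deriv[OF z0_in_S] by (rule has_derivative_linear)
  then have "g' z0 z0 = (\<Sum>j\<in>UNIV. z0 $ j *s g' z0 (axis j 1))"
    by (subst basis_expansion[of z0, symmetric]) (simp add: linear_sum g'_z0_cmult)
  then have "inner (g' z0 z0) w0 = (\<Sum>j\<in>UNIV. Re (z0 $ j * \<psi> j))"
    by (simp add: inner_eq_Re_cinner cinner_sum_left cinner_scale_left \<psi>_def Re_sum)
  also have "\<dots> = (\<Sum>j\<in>{j. cmod (z0 $ j) = 1}. Re (z0 $ j * \<psi> j))"
    using \<psi>_interior norm_z0_le by (intro sum.mono_neutral_right) (auto simp: order_less_le)
  finally show ?thesis ..
qed

end

theorem theorem1p2:
  fixes f :: "complex ^ 'n::finite \<Rightarrow> complex ^ 'm::finite"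
    and \<alpha> :: real and z0 :: "complex ^ 'n" and w0 :: "complex ^ 'm"
    and V :: "(complex ^ 'n) set" and g :: "complex ^ 'n \<Rightarrow> complex ^ 'm"
    and g' :: "complex ^ 'n \<Rightarrow> complex ^ 'n \<Rightarrow> complex ^ 'm"
  assumes "0 < \<alpha>" and "\<alpha> < 1"
    and "holo_vec_on f polydisc"
    and "f ` polydisc \<subseteq> ball 0 1"
    and "z0 \<in> frontier polydisc"
    and "z0 \<in> V"
    and "C1alpha_extension f \<alpha> V g g'"
    and "g z0 = w0" and "w0 \<in> sphere 0 1"
  shows "let a = f 0;
             lam = (cmod (1 - (\<Sum>j\<in>UNIV. cnj (a $ j) * w0 $ j)))\<^sup>2 / (1 - (norm a)\<^sup>2)
         in lam > 0 \<and>
            (\<exists>\<gamma> :: 'n \<Rightarrow> real.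
               (\<forall>j. \<gamma> j \<ge> 0) \<and>
               (\<forall>j. cmod (z0 $ j) < 1 \<longrightarrow> \<gamma> j = 0) \<and>
               (\<Sum>j\<in>{j. cmod (z0 $ j) = 1}. \<gamma> j) \<ge> 1 \<and>
               (\<forall>j. (\<Sum>i\<in>UNIV. cnj (cjac g' z0 i j) * w0 $ i)
                      = complex_of_real (lam * \<gamma> j) * z0 $ j))"
proof -
  interpret boundary_contact f z0 w0 V g g'
    using assms(3-9) by unfold_locales (auto simp: C1alpha_extension_def)
  define lam where "lam = (cmod (1 - cinner w0 (f 0)))\<^sup>2 / (1 - (norm (f 0))\<^sup>2)"
  have "norm (f 0) < 1"
    using assms(4) by (force simp: polydisc_def)
  then have "lam > 0"
    unfolding lam_def using norm_w0 by (rule julia_quotient_pos)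
  moreover have "lam \<le> inner (g' z0 z0) w0"
    using julia_bound by (simp add: lam_def)
  define \<gamma> where "\<gamma> j = Re (z0 $ j * \<psi> j) / lam" for j
  have "(\<Sum>j\<in>{j. cmod (z0 $ j) = 1}. \<gamma> j) = inner (g' z0 z0) w0 / lam"
    unfolding \<gamma>_def by (simp only: sum_divide_distrib[symmetric] sum_Re_z0_\<psi>)
  then have "(\<Sum>j\<in>{j. cmod (z0 $ j) = 1}. \<gamma> j) \<ge> 1"
    using \<open>lam > 0\<close> \<open>lam \<le> inner (g' z0 z0) w0\<close> by simp
  moreover have "\<gamma> j \<ge> 0" for j
    using Re_z0_\<psi>_nonneg \<open>lam > 0\<close> by (simp add: \<gamma>_def)
  moreover have "\<gamma> j = 0" if "cmod (z0 $ j) < 1" for j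
    using \<psi>_interior[OF that] by (simp add: \<gamma>_def)
  moreover have "(\<Sum>i\<in>UNIV. cnj (cjac g' z0 i j) * w0 $ i) = of_real (lam * \<gamma> j) * z0 $ j" for j
    using conj_jacobian_column \<open>lam > 0\<close> by (simp add: \<gamma>_def)
  moreover have "(\<Sum>j\<in>UNIV. cnj (f 0 $ j) * w0 $ j) = cinner w0 (f 0)"
    by (simp add: cinner_def mult.commute)
  ultimately show ?thesis
    using \<open>lam > 0\<close> by (simp only: Let_def lam_def[symmetric]) blast
qed

end
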